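(* Let $k\ge2$ and $n\le0$. Then $\mathcal{F}_{n,k}(x)$ is the zero polynomial if and only if $q_{n,k}<r_{n,k}$. Equivalently, $\mathcal{F}_{n,k}\equiv0$ exactly when $|n|\in\{kq+q,\,kq+q+1,\dots,kq+k-2\}$ for some $q\in\{0,1,\dots,k-2\}$; this is a block of $k-q-1$ consecutive indices for each such $q$. In particular, $\mathcal{F}_{n,k}\not\equiv0$ whenever $|n|\ge k^2-k-1$, and there are exactly $k(k-1)/2$ indices $n\le0$ (the $k-1$ initial values included) for which $\mathcal{F}_{n,k}\equiv0$.
   Context: For $k\ge2$, the polynomials $\mathcal{F}_{n,k}(x)\in\mathbb{Z}[x]$ ($n\in\mathbb{Z}$) are defined by $\mathcal{F}_{1,k}=1$, $\mathcal{F}_{n,k}=0$ for $n=0,-1,\dots,-(k-2)$, and $\mathcal{F}_{n,k}(x)=\sum_{j=1}^{k}x^{k-j}\mathcal{F}_{n-j,k}(x)$ for all $n\in\mathbb{Z}$. This recurrence is used upwards for $n\ge2$, and downwards for $n\le-(k-1)$ as $\mathcal{F}_{n,k}=\mathcal{F}_{n+k,k}-\sum_{j=1}^{k-1}x^j\mathcal{F}_{n+j,k}$. For $n\le0$, set $q_{n,k}=\lfloor(|n|+1)/k\rfloor$ and let $r_{n,k}\in\{0,\dots,k-1\}$ be the residue of $|n|+1$ modulo $k$. Then $|n|+1=kq_{n,k}+r_{n,k}$. *)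

theory Defs
  imports "HOL-Computational_Algebra.Polynomial"
begin

text \<open>Upward part: FU k m = F_{m+2-k,k}, for m :: nat (indices n >= 2-k).
  Initial values F_{1}=1, F_{0}=...=F_{-(k-2)}=0, then
  F_n = sum_{j=1}^k x^(k-j) F_{n-j} for n >= 2.\<close>
fun FU :: "nat \<Rightarrow> nat \<Rightarrow> int poly" where
  "FU k m = (if m < k then (if m = k - 1 then 1 else 0)
             else (\<Sum>j\<in>{1..k}. monom 1 (k - j) * FU k (m - j)))"

text \<open>Downward part: FD k m = F_{1-m,k}, for m :: nat (indices n <= 1),
  using F_n = F_{n+k} - sum_{j=1}^{k-1} x^j F_{n+j} for n <= -(k-1).\<close>
fun FD :: "nat \<Rightarrow> nat \<Rightarrow> int poly" where
  "FD k m = (if k = 0 \<or> m < k then (if m = 0 then 1 else 0)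
             else FD k (m - k) - (\<Sum>j\<in>{1..k-1}. monom 1 j * FD k (m - j)))"

definition Fib :: "nat \<Rightarrow> int \<Rightarrow> int poly" where
  "Fib k n = (if n \<ge> 1 then FU k (nat (n + int k - 2)) else FD k (nat (1 - n)))"

definition q_nk :: "nat \<Rightarrow> int \<Rightarrow> int" where
  "q_nk k n = (\<bar>n\<bar> + 1) div int k"

definition r_nk :: "nat \<Rightarrow> int \<Rightarrow> int" where
  "r_nk k n = (\<bar>n\<bar> + 1) mod int k"

end

theory Submission
  imports Defs
begin

text \<open>Write \<open>m = 1 - n = k q + r\<close> with \<open>0 \<le> r < k\<close>, so that \<open>FD k m = F\<^sub>n\<^sub>,\<^sub>k\<close>.
  Subtracting \<open>x\<close> times the downward recurrence at \<open>m - 1\<close> from the one at \<open>m\<close> telescopes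
  it into the two-term recurrence \<open>F(m) = (1 + x\<^sup>k) F(m - k) - x F(m - k - 1)\<close> for \<open>m > k\<close>,
  which in block coordinates lowers \<open>q\<close> by one and keeps \<open>r\<close> or lowers it by one.
  By induction on \<open>q\<close>, \<open>F\<close> vanishes when \<open>q < r\<close>, and the coefficient of \<open>x\<^sup>r\<close> obeys
  Pascal's rule, so it equals \<open>(-1)\<^sup>r (q choose r)\<close>, which is nonzero when \<open>r \<le> q\<close>.
  Counting the pairs \<open>q < r < k\<close> gives \<open>k(k-1)/2\<close> zeros.\<close>

declare FD.simps [simp del]

lemma FD_initial: "m < k \<Longrightarrow> FD k m = (if m = 0 then 1 else 0)"
  by (subst FD.simps) simp

lemma FD_rec:
  "k \<ge> 2 \<Longrightarrow> m \<ge> k \<Longrightarrow>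
    FD k m = FD k (m - k) - (\<Sum>j\<in>{1..k-1}. monom 1 j * FD k (m - j))"
  by (subst FD.simps) simp

lemma FD_self:
  assumes "k \<ge> 2"
  shows "FD k k = 1"
proof -
  have "(\<Sum>j\<in>{1..k-1}. monom 1 j * FD k (k - j)) = 0"
    by (rule sum.neutral) (auto simp: FD_initial)
  then show ?thesis using FD_rec[OF assms order.refl] FD_initial[of 0 k] assms by simp
qed

lemma FD_window_sum:
  assumes "k \<ge> 2" and "i \<ge> k"
  shows "(\<Sum>j<k. monom 1 j * FD k (i - j)) = FD k (i - k)"
proof -
  obtain k' where k': "k = Suc k'" using assms(1) by (cases k) auto
  have "(\<Sum>j<k. monom 1 j * FD k (i - j)) = FD k i + (\<Sum>j\<in>{1..k'}. monom 1 j * FD k (i - j))"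
    unfolding k' sum.lessThan_Suc_shift by (simp add: sum.atLeast1_atMost_eq)
  then show ?thesis using FD_rec[OF assms] k' by simp
qed

lemma FD_two_term_rec:
  assumes "k \<ge> 2" and "m \<ge> Suc k"
  shows "FD k m = (1 + monom 1 k) * FD k (m - k) - monom 1 1 * FD k (m - k - 1)"
proof -
  define g where "g j = monom 1 j * FD k (m - j)" for j
  have shifted: "monom 1 1 * (\<Sum>j<k. monom 1 j * FD k (m - 1 - j)) = (\<Sum>j<k. g (Suc j))"
    by (simp add: g_def sum_distrib_left mult.assoc[symmetric] mult_monom)
  have "(\<Sum>j<k. g j) + g k = g 0 + (\<Sum>j<k. g (Suc j))"
    using sum.lessThan_Suc[of g k] sum.lessThan_Suc_shift[of g k] by simp
  then have "FD k (m - k) + monom 1 k * FD k (m - k) = FD k m + monom 1 1 * FD k (m - k - 1)"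
    using FD_window_sum[OF assms(1), of m] FD_window_sum[OF assms(1), of "m - 1"] assms(2) shifted
    by (simp add: g_def)
  then show ?thesis by (simp add: algebra_simps)
qed

lemma FD_two_term_rec_block:
  assumes "k \<ge> 2" and "r < k" and "0 < q \<or> 0 < r"
  shows "FD k (k * Suc q + r) = (1 + monom 1 k) * FD k (k * q + r) - monom 1 1 * FD k (k * q + r - 1)"
proof -
  have "k * Suc q + r \<ge> Suc k" using assms by (cases q) auto
  then show ?thesis using FD_two_term_rec[OF assms(1)] by simp
qed

lemma FD_block_eq_0_if_less:
  assumes "k \<ge> 2" and "r < k" and "q < r"
  shows "FD k (k * q + r) = 0"
  using assms(2,3)
proof (induction q arbitrary: r)
  case 0
  then show ?case by (simp add: FD_initial)
next
  case (Suc q)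
  have "FD k (k * q + r) = 0" using Suc by simp
  moreover have "FD k (k * q + r - 1) = 0"
    using Suc.IH[of "r - 1"] Suc.prems by simp
  ultimately show ?case
    using FD_two_term_rec_block[OF assms(1) \<open>r < k\<close>, of q] Suc.prems by simp
qed

lemma coeff_FD_block:
  assumes "k \<ge> 2" and "r < k"
  shows "coeff (FD k (k * q + r)) r = (-1) ^ r * int (q choose r)"
  using assms(2)
proof (induction q arbitrary: r)
  case 0
  then show ?case by (simp add: FD_initial)
next
  case (Suc q)
  consider "q = 0" "r = 0" | "r = 0" "q > 0" | r' where "r = Suc r'"
    by (cases r) auto
  then show ?case
  proof cases
    case 1
    then show ?thesis using FD_self[OF assms(1)] by simp
  next
    case 2
    then show ?thesis using FD_two_term_rec_block[OF assms(1) Suc.prems, of q] Suc.IH[of 0] assms(1)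
      by (simp add: coeff_monom_mult distrib_right)
  next
    case 3
    have "FD k (k * Suc q + r) = (1 + monom 1 k) * FD k (k * q + r) - monom 1 1 * FD k (k * q + r')"
      using FD_two_term_rec_block[OF assms(1) Suc.prems, of q] 3 by simp
    then have "coeff (FD k (k * Suc q + r)) r
        = coeff (FD k (k * q + r)) r - coeff (FD k (k * q + r')) r'"
      using Suc.prems 3 by (simp add: distrib_right coeff_monom_mult)
    also have "\<dots> = (-1) ^ r * int (q choose r) - (-1) ^ r' * int (q choose r')"
      using Suc.IH[of r] Suc.IH[of r'] Suc.prems 3 by simp
    finally show ?thesis using 3 by (simp add: algebra_simps)
  qed
qed

lemma FD_block_eq_0_iff:
  assumes "k \<ge> 2" and "r < k"
  shows "FD k (k * q + r) = 0 \<longleftrightarrow> q < r"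
proof
  assume "FD k (k * q + r) = 0"
  then have "q choose r = 0" using coeff_FD_block[OF assms, of q] by simp
  then show "q < r" by simp
qed (use FD_block_eq_0_if_less[OF assms] in simp)

lemma FD_eq_0_iff: "k \<ge> 2 \<Longrightarrow> FD k m = 0 \<longleftrightarrow> m div k < m mod k"
  using FD_block_eq_0_iff[of k "m mod k" "m div k"] by simp

lemma Fib_nonpos: "n \<le> 0 \<Longrightarrow> Fib k n = FD k (nat (1 - n))"
  by (simp add: Fib_def)

lemma Fib_eq_0_iff_q_nk_less_r_nk:
  assumes "k \<ge> 2" and "n \<le> 0"
  shows "Fib k n = 0 \<longleftrightarrow> q_nk k n < r_nk k n"
proof -
  have "\<bar>n\<bar> + 1 = int (nat (1 - n))" using assms(2) by simp
  then have "q_nk k n = int (nat (1 - n) div k)" "r_nk k n = int (nat (1 - n) mod k)"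
    unfolding q_nk_def r_nk_def by (simp_all add: zdiv_int zmod_int)
  then show ?thesis using Fib_nonpos[OF assms(2)] FD_eq_0_iff[OF assms(1)] by simp
qed

lemma div_less_mod_iff_in_block:
  fixes a k :: int
  assumes "k > 0" and "a \<ge> 0"
  shows "(a + 1) div k < (a + 1) mod k \<longleftrightarrow> (\<exists>q\<in>{0..k - 2}. a \<in> {k * q + q .. k * q + k - 2})"
proof
  define q r where "q = (a + 1) div k" and "r = (a + 1) mod k"
  assume "(a + 1) div k < (a + 1) mod k"
  then have "q < r" by (simp add: q_def r_def)
  moreover have "q \<ge> 0" "r < k" "a + 1 = k * q + r"
    using assms by (simp_all add: q_def r_def pos_imp_zdiv_nonneg_iff)
  ultimately show "\<exists>q\<in>{0..k - 2}. a \<in> {k * q + q .. k * q + k - 2}"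
    by (intro bexI[of _ q]) auto
next
  assume "\<exists>q\<in>{0..k - 2}. a \<in> {k * q + q .. k * q + k - 2}"
  then obtain q where q: "0 \<le> q" "k * q + q \<le> a" "a \<le> k * q + k - 2" by auto
  define s where "s = a + 1 - k * q"
  have s: "q < s" "s < k" and a: "a + 1 = k * q + s" using q by (auto simp: s_def)
  then have "(a + 1) div k = q" "(a + 1) mod k = s" using q(1) by (simp_all add: a)
  then show "(a + 1) div k < (a + 1) mod k" using s by simp
qed

lemma r_nk_le_q_nk:
  assumes "k \<ge> 1" and "\<bar>n\<bar> \<ge> int k ^ 2 - int k - 1"
  shows "r_nk k n \<le> q_nk k n"
proof -
  have "int k * (int k - 1) \<le> \<bar>n\<bar> + 1" using assms(2) by (simp add: power2_eq_square algebra_simps)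
  then have "(int k * (int k - 1)) div int k \<le> q_nk k n"
    unfolding q_nk_def by (rule zdiv_mono1) (use assms(1) in simp)
  moreover have "r_nk k n < int k" using assms(1) by (simp add: r_nk_def)
  ultimately show ?thesis using assms(1) by simp
qed

lemma card_div_less_mod:
  fixes k :: nat
  assumes "k > 0"
  shows "card {m. m div k < m mod k} = k * (k - 1) div 2"
proof -
  define blocks where "blocks = (SIGMA r:{..<k}. {..<r})"
  have "{m. m div k < m mod k} = (\<lambda>(r, q). k * q + r) ` blocks"
  proof (intro set_eqI iffI)
    fix m assume "m \<in> {m. m div k < m mod k}"
    then have "(m mod k, m div k) \<in> blocks" using assms by (simp add: blocks_def)
    then show "m \<in> (\<lambda>(r, q). k * q + r) ` blocks" by force
  qed (auto simp: blocks_def)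
  moreover have "inj_on (\<lambda>(r, q). k * q + r) blocks"
  proof (rule inj_onI, clarify)
    fix r q r' q' assume "(r, q) \<in> blocks" "(r', q') \<in> blocks" "k * q + r = k * q' + r'"
    then have "r < k" "r' < k" "k * q + r = k * q' + r'" by (auto simp: blocks_def)
    then have "(k * q + r) div k = (k * q' + r') div k" "(k * q + r) mod k = (k * q' + r') mod k"
      by simp_all
    then show "r = r' \<and> q = q'" using \<open>r < k\<close> \<open>r' < k\<close> by simp
  qed
  moreover have "card blocks = (\<Sum>r<k. r)" by (simp add: blocks_def)
  moreover have "(\<Sum>r<k. r) = k * (k - 1) div 2"
    using gauss_sum_nat[of "k - 1"] assms by (simp add: atLeast0AtMost lessThan_Suc_atMost[symmetric] mult.commute)
  ultimately show ?thesis by (simp add: card_image)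
qed

lemma card_nonpos_Fib_zeros:
  assumes "k \<ge> 2"
  shows "card {m::int. m \<le> 0 \<and> Fib k m = 0} = k * (k - 1) div 2"
proof -
  have "{m::int. m \<le> 0 \<and> Fib k m = 0} = (\<lambda>M. 1 - int M) ` {M. M div k < M mod k}"
  proof (intro set_eqI iffI)
    fix m :: int assume "m \<in> {m. m \<le> 0 \<and> Fib k m = 0}"
    then have "m = 1 - int (nat (1 - m))" "nat (1 - m) \<in> {M. M div k < M mod k}"
      using Fib_nonpos[of m k] FD_eq_0_iff[OF assms, of "nat (1 - m)"] by auto
    then show "m \<in> (\<lambda>M. 1 - int M) ` {M. M div k < M mod k}" by blast
  next
    fix m :: int assume "m \<in> (\<lambda>M. 1 - int M) ` {M. M div k < M mod k}"
    then obtain M where M: "m = 1 - int M" "M div k < M mod k" by blast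
    then have "M \<noteq> 0" by (metis div_0 mod_0 less_irrefl)
    then show "m \<in> {m. m \<le> 0 \<and> Fib k m = 0}"
      using M Fib_nonpos[of m k] FD_eq_0_iff[OF assms, of M] by simp
  qed
  moreover have "inj_on (\<lambda>M. 1 - int M) {M. M div k < M mod k}" by (rule inj_onI) simp
  ultimately show ?thesis using card_div_less_mod assms by (simp add: card_image)
qed

theorem mainTheorem4:
  fixes k :: nat and n :: int
  assumes "k \<ge> 2" and "n \<le> 0"
  shows "(Fib k n = 0 \<longleftrightarrow> q_nk k n < r_nk k n)
       \<and> (Fib k n = 0 \<longleftrightarrow>
            (\<exists>q\<in>{0..int k - 2}. \<bar>n\<bar> \<in> {int k * q + q .. int k * q + int k - 2}))
       \<and> (\<forall>q\<in>{0..int k - 2}. card {int k * q + q .. int k * q + int k - 2} = nat (int k - q - 1))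
       \<and> (\<bar>n\<bar> \<ge> int k ^ 2 - int k - 1 \<longrightarrow> Fib k n \<noteq> 0)
       \<and> card {m::int. m \<le> 0 \<and> Fib k m = 0} = k * (k - 1) div 2"
proof -
  note zero_iff = Fib_eq_0_iff_q_nk_less_r_nk[OF assms]
  have "q_nk k n < r_nk k n \<longleftrightarrow>
      (\<exists>q\<in>{0..int k - 2}. \<bar>n\<bar> \<in> {int k * q + q .. int k * q + int k - 2})"
    unfolding q_nk_def r_nk_def using assms(1) by (intro div_less_mod_iff_in_block) auto
  moreover have "\<forall>q\<in>{0..int k - 2}. card {int k * q + q .. int k * q + int k - 2} = nat (int k - q - 1)"
    by simp
  moreover have "\<bar>n\<bar> \<ge> int k ^ 2 - int k - 1 \<longrightarrow> Fib k n \<noteq> 0"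
    using r_nk_le_q_nk[of k n] zero_iff assms(1) by auto
  ultimately show ?thesis
    using zero_iff card_nonpos_Fib_zeros[OF assms(1)] by blast
qed

end
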